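(* The empty space is the only finitely generated object of the category $\mathsf{Top}_0$ of T$_0$-spaces and continuous maps.
   Context: An object $X$ of a category $\mathcal{C}$ is finitely generated if for every directed diagram $(Z_i)_{i\in I}$ in $\mathcal{C}$ (indexed by a directed poset, i.e. every finite subset has an upper bound) all of whose connecting morphisms $z_{i,j}$ are monomorphisms, with colimit cocone $c_i:Z_i\to Z$ in $\mathcal{C}$, every morphism $f:X\to Z$ factorizes as $f=c_i\cdot g$ for some $i$ and $g:X\to Z_i$, and if also $f=c_i\cdot g'$ then $z_{i,j}\cdot g=z_{i,j}\cdot g'$ for some connecting morphism $z_{i,j}$. *)

theory Defs
  imports "HOL-Analysis.Analysis"
begin

text \<open>The category Top_0: objects are T0 topological spaces (t0_space X for X :: 'a topology),
  morphisms are continuous maps; two morphisms A -> B are equal iff they agree on topspace A.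
  Since HOL cannot quantify over types inside a formula, the "all objects" quantifications
  are taken over spaces carried by explicitly given types, passed as itself-arguments.\<close>

definition directed_poset :: "'i set \<Rightarrow> ('i \<Rightarrow> 'i \<Rightarrow> bool) \<Rightarrow> bool" where
  "directed_poset I le \<longleftrightarrow>
     (\<forall>i\<in>I. le i i) \<and>
     (\<forall>i\<in>I. \<forall>j\<in>I. \<forall>k\<in>I. le i j \<and> le j k \<longrightarrow> le i k) \<and>
     (\<forall>i\<in>I. \<forall>j\<in>I. le i j \<and> le j i \<longrightarrow> i = j) \<and>
     (\<forall>F. finite F \<and> F \<subseteq> I \<longrightarrow> (\<exists>u\<in>I. \<forall>i\<in>F. le i u))"

definition top0_mono :: "'w itself \<Rightarrow> 'a topology \<Rightarrow> 'b topology \<Rightarrow> ('a \<Rightarrow> 'b) \<Rightarrow> bool" where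
  "top0_mono _ A B m \<longleftrightarrow> continuous_map A B m \<and>
     (\<forall>(W::'w topology) g h. t0_space W \<and> continuous_map W A g \<and> continuous_map W A h \<and>
        (\<forall>x\<in>topspace W. m (g x) = m (h x)) \<longrightarrow> (\<forall>x\<in>topspace W. g x = h x))"

definition top0_mono_directed_diagram ::
  "'w itself \<Rightarrow> 'i set \<Rightarrow> ('i \<Rightarrow> 'i \<Rightarrow> bool) \<Rightarrow> ('i \<Rightarrow> 'z topology) \<Rightarrow> ('i \<Rightarrow> 'i \<Rightarrow> 'z \<Rightarrow> 'z) \<Rightarrow> bool" where
  "top0_mono_directed_diagram W I le Z z \<longleftrightarrow>
     directed_poset I le \<and>
     (\<forall>i\<in>I. t0_space (Z i)) \<and>
     (\<forall>i\<in>I. \<forall>j\<in>I. le i j \<longrightarrow> top0_mono W (Z i) (Z j) (z i j)) \<and>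
     (\<forall>i\<in>I. \<forall>x\<in>topspace (Z i). z i i x = x) \<and>
     (\<forall>i\<in>I. \<forall>j\<in>I. \<forall>k\<in>I. le i j \<and> le j k \<longrightarrow>
        (\<forall>x\<in>topspace (Z i). z j k (z i j x) = z i k x))"

definition is_cocone ::
  "'i set \<Rightarrow> ('i \<Rightarrow> 'i \<Rightarrow> bool) \<Rightarrow> ('i \<Rightarrow> 'z topology) \<Rightarrow> ('i \<Rightarrow> 'i \<Rightarrow> 'z \<Rightarrow> 'z)
     \<Rightarrow> 'c topology \<Rightarrow> ('i \<Rightarrow> 'z \<Rightarrow> 'c) \<Rightarrow> bool" where
  "is_cocone I le Z z C c \<longleftrightarrow>
     (\<forall>i\<in>I. continuous_map (Z i) C (c i)) \<and>
     (\<forall>i\<in>I. \<forall>j\<in>I. le i j \<longrightarrow> (\<forall>x\<in>topspace (Z i). c j (z i j x) = c i x))"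

definition top0_colimit ::
  "'w itself \<Rightarrow> 'i set \<Rightarrow> ('i \<Rightarrow> 'i \<Rightarrow> bool) \<Rightarrow> ('i \<Rightarrow> 'z topology) \<Rightarrow> ('i \<Rightarrow> 'i \<Rightarrow> 'z \<Rightarrow> 'z)
     \<Rightarrow> 'c topology \<Rightarrow> ('i \<Rightarrow> 'z \<Rightarrow> 'c) \<Rightarrow> bool" where
  "top0_colimit _ I le Z z C c \<longleftrightarrow>
     t0_space C \<and> is_cocone I le Z z C c \<and>
     (\<forall>(W::'w topology) d. t0_space W \<and> is_cocone I le Z z W d \<longrightarrow>
        (\<exists>u. continuous_map C W u \<and> (\<forall>i\<in>I. \<forall>x\<in>topspace (Z i). u (c i x) = d i x)) \<and>
        (\<forall>u v. continuous_map C W u \<and> continuous_map C W v \<and>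
           (\<forall>i\<in>I. \<forall>x\<in>topspace (Z i). u (c i x) = d i x) \<and>
           (\<forall>i\<in>I. \<forall>x\<in>topspace (Z i). v (c i x) = d i x) \<longrightarrow>
           (\<forall>y\<in>topspace C. u y = v y)))"

definition top0_finitely_generated ::
  "'i itself \<Rightarrow> 'z itself \<Rightarrow> 'c itself \<Rightarrow> 'w itself \<Rightarrow> 'a topology \<Rightarrow> bool" where
  "top0_finitely_generated _ _ _ W X \<longleftrightarrow>
     (\<forall>(I::'i set) le (Z::'i \<Rightarrow> 'z topology) z (C::'c topology) c.
        top0_mono_directed_diagram W I le Z z \<and> top0_colimit W I le Z z C c \<longrightarrow>
        (\<forall>f. continuous_map X C f \<longrightarrow>
           (\<exists>i\<in>I. \<exists>g. continuous_map X (Z i) g \<and> (\<forall>x\<in>topspace X. f x = c i (g x))) \<and>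
           (\<forall>i\<in>I. \<forall>g g'. continuous_map X (Z i) g \<and> continuous_map X (Z i) g' \<and>
               (\<forall>x\<in>topspace X. f x = c i (g x)) \<and> (\<forall>x\<in>topspace X. f x = c i (g' x)) \<longrightarrow>
               (\<exists>j\<in>I. le i j \<and> (\<forall>x\<in>topspace X. z i j (g x) = z i j (g' x))))))"

end

theory Submission
  imports Defs
begin

(* Finite generation of a nonempty space X fails already in its uniqueness part. On the
  natural numbers take a decreasing chain of T0 topologies: an open set containing 1 contains 0,
  one containing 0 contains a tail of the sequence 2, 3, ..., and for the n-th topology one
  containing some x with 2 <= x < n contains 1. In the intersection of the chain, i.e. its
  colimit in Top, every open set containing 0 contains some x >= 2 and hence 1, so 0 and 1 are
  topologically indistinguishable, and the colimit in Top_0, its T0 reflection, merges them.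
  Thus the constant maps from X with values 0 and 1 into the first space of the chain become
  equal in the colimit, although no connecting map (all are identities) equalizes them. *)

lemma continuous_map_t0_space_eq:
  assumes "continuous_map X Y f" "t0_space Y" "x \<in> topspace X" "y \<in> topspace X"
    and indist: "\<And>U. openin X U \<Longrightarrow> x \<in> U \<longleftrightarrow> y \<in> U"
  shows "f x = f y"
proof (rule ccontr)
  assume "f x \<noteq> f y"
  moreover have "f x \<in> topspace Y" "f y \<in> topspace Y"
    using assms(1,3,4) continuous_map_image_subset_topspace by blast+
  ultimately obtain V where "openin Y V" "f x \<notin> V \<longleftrightarrow> f y \<in> V"
    using \<open>t0_space Y\<close> unfolding t0_space_def by blast
  moreover have "openin X {z \<in> topspace X. f z \<in> V}"
    using assms(1) \<open>openin Y V\<close> by (simp add: continuous_map)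
  ultimately show False
    using indist assms(3,4) by blast
qed

lemma directed_poset_UNIV: "directed_poset (UNIV :: 'a::linorder set) (\<le>)"
  unfolding directed_poset_def
proof (intro conjI allI impI ballI)
  fix F :: "'a set"
  assume "finite F \<and> F \<subseteq> UNIV"
  then have "\<forall>i\<in>F. i \<le> Max F"
    by simp
  then show "\<exists>u\<in>UNIV. \<forall>i\<in>F. i \<le> u"
    by blast
qed auto

lemma top0_mono_if_inj_on:
  assumes "continuous_map A B m" "inj_on m (topspace A)"
  shows "top0_mono TYPE('w) A B m"
  unfolding top0_mono_def
proof (intro conjI allI impI ballI)
  fix V :: "'w topology" and g h x
  assume "t0_space V \<and> continuous_map V A g \<and> continuous_map V A h \<and>
      (\<forall>x\<in>topspace V. m (g x) = m (h x))"
    and "x \<in> topspace V"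
  then have "g x \<in> topspace A" "h x \<in> topspace A" "m (g x) = m (h x)"
    by (auto dest: continuous_map_image_subset_topspace)
  with assms(2) show "g x = h x"
    by (simp add: inj_on_def)
qed (rule assms(1))

lemma top0_finitely_generated_empty:
  assumes "topspace X = {}"
  shows "top0_finitely_generated TYPE('i) TYPE('z) TYPE('c) TYPE('w) X"
  unfolding top0_finitely_generated_def
proof (intro allI impI conjI)
  fix I :: "'i set" and le Z z and C :: "'c topology" and c f
  assume "top0_mono_directed_diagram TYPE('w) I le Z z \<and> top0_colimit TYPE('w) I le Z z C c"
  then have "directed_poset I le"
    by (simp add: top0_mono_directed_diagram_def)
  then have refl: "\<forall>i\<in>I. le i i" and bound: "\<forall>F. finite F \<and> F \<subseteq> I \<longrightarrow> (\<exists>u\<in>I. \<forall>i\<in>F. le i u)"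
    unfolding directed_poset_def by simp_all
  obtain i where "i \<in> I"
    using bound[rule_format, of "{}"] by auto
  moreover have "continuous_map X (Z i) (\<lambda>x. undefined)"
    using assms by (simp add: continuous_map)
  ultimately show "\<exists>i\<in>I. \<exists>g. continuous_map X (Z i) g \<and> (\<forall>x\<in>topspace X. f x = c i (g x))"
    using assms by auto
  show "\<forall>i\<in>I. \<forall>g g'. continuous_map X (Z i) g \<and> continuous_map X (Z i) g' \<and>
      (\<forall>x\<in>topspace X. f x = c i (g x)) \<and> (\<forall>x\<in>topspace X. f x = c i (g' x)) \<longrightarrow>
      (\<exists>j\<in>I. le i j \<and> (\<forall>x\<in>topspace X. z i j (g x) = z i j (g' x)))"
    using refl assms by auto
qed

lemma not_top0_finitely_generated_if_colimit_merges:
  fixes I :: "'i set" and Z :: "'i \<Rightarrow> 'z topology" and C :: "'c topology" and X :: "'a topology"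
  assumes diagram: "top0_mono_directed_diagram TYPE('w) I le Z z"
    and colimit: "top0_colimit TYPE('w) I le Z z C c"
    and i: "i \<in> I" and a: "a \<in> topspace (Z i)" and b: "b \<in> topspace (Z i)"
    and merged: "c i a = c i b"
    and separated: "\<And>j. j \<in> I \<Longrightarrow> le i j \<Longrightarrow> z i j a \<noteq> z i j b"
    and nonempty: "topspace X \<noteq> {}"
  shows "\<not> top0_finitely_generated TYPE('i) TYPE('z) TYPE('c) TYPE('w) X"
proof
  assume fg: "top0_finitely_generated TYPE('i) TYPE('z) TYPE('c) TYPE('w) X"
  have "c i a \<in> topspace C"
    using colimit i a unfolding top0_colimit_def is_cocone_def continuous_map by blast
  then have "continuous_map X C (\<lambda>x. c i a)"
    by simp
  note essentially_unique = fg[unfolded top0_finitely_generated_def, rule_format,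
      OF conjI[OF diagram colimit] this, THEN conjunct2, rule_format, OF i]
  have "continuous_map X (Z i) (\<lambda>x. a) \<and> continuous_map X (Z i) (\<lambda>x. b) \<and>
      (\<forall>x\<in>topspace X. c i a = c i a) \<and> (\<forall>x\<in>topspace X. c i a = c i b)"
    using a b merged by simp
  from essentially_unique[OF this]
  obtain j where "j \<in> I" "le i j" "\<forall>x\<in>topspace X. z i j a = z i j b"
    by blast
  with nonempty separated show False
    by blast
qed

definition chain_open :: "enat \<Rightarrow> nat set \<Rightarrow> bool" where
  "chain_open n U \<longleftrightarrow>
     (1 \<in> U \<longrightarrow> 0 \<in> U) \<and> (0 \<in> U \<longrightarrow> (\<forall>\<^sub>F x in sequentially. x \<in> U)) \<and>
     (\<forall>x\<in>U. 2 \<le> x \<and> enat x < n \<longrightarrow> 1 \<in> U)"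

lemma istopology_chain_open: "istopology (chain_open n)"
  unfolding istopology_def
proof (intro conjI allI impI)
  fix S T
  assume "chain_open n S" "chain_open n T"
  then show "chain_open n (S \<inter> T)"
    unfolding chain_open_def by (simp add: eventually_conj_iff) blast
next
  fix K
  assume "\<forall>U\<in>K. chain_open n U"
  then show "chain_open n (\<Union>K)"
    unfolding chain_open_def by (fastforce elim: eventually_mono)
qed

definition chain_topology :: "enat \<Rightarrow> nat topology" where
  "chain_topology n = topology (chain_open n)"

lemma openin_chain_topology: "openin (chain_topology n) U \<longleftrightarrow> chain_open n U"
  by (simp add: chain_topology_def istopology_chain_open)

lemma topspace_chain_topology [simp]: "topspace (chain_topology n) = UNIV"
proof -
  have "openin (chain_topology n) UNIV"
    by (simp add: openin_chain_topology chain_open_def)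
  then show ?thesis
    by (auto simp: topspace_def)
qed

lemma continuous_map_chain_topology_id:
  "m \<le> n \<Longrightarrow> continuous_map (chain_topology m) (chain_topology n) (\<lambda>x. x)"
  unfolding continuous_map openin_chain_topology chain_open_def
  by (auto dest: less_le_trans)

lemma openin_chain_topology_infinity:
  "openin (chain_topology \<infinity>) U \<longleftrightarrow> (\<forall>n. openin (chain_topology (enat n)) U)"
proof -
  have "(\<forall>x\<in>U. 2 \<le> x \<longrightarrow> 1 \<in> U) \<longleftrightarrow> (\<forall>n. \<forall>x\<in>U. 2 \<le> x \<and> x < n \<longrightarrow> 1 \<in> U)"
    by (meson lessI)
  then show ?thesis
    unfolding openin_chain_topology chain_open_def by simp
qed

lemma chain_topology_infinity_indistinguishable:
  assumes "openin (chain_topology \<infinity>) U"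
  shows "0 \<in> U \<longleftrightarrow> 1 \<in> U"
proof -
  have one: "1 \<in> U \<longrightarrow> 0 \<in> U" and zero: "0 \<in> U \<longrightarrow> (\<forall>\<^sub>F x in sequentially. x \<in> U)"
    and large: "\<forall>x\<in>U. 2 \<le> x \<longrightarrow> 1 \<in> U"
    using assms by (simp_all add: openin_chain_topology chain_open_def)
  have "1 \<in> U" if "0 \<in> U"
  proof -
    obtain N where "\<forall>x\<ge>N. x \<in> U"
      using zero \<open>0 \<in> U\<close> by (auto simp: eventually_sequentially)
    then have "max N 2 \<in> U"
      by simp
    then show ?thesis
      using large by (meson max.cobounded2)
  qed
  with one show ?thesis
    by blast
qed

lemma continuous_map_from_chain_topology_infinity:
  assumes "\<And>n. continuous_map (chain_topology (enat n)) Y f"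
  shows "continuous_map (chain_topology \<infinity>) Y f"
  unfolding continuous_map openin_chain_topology_infinity
proof (intro conjI allI impI)
  show "f ` topspace (chain_topology \<infinity>) \<subseteq> topspace Y"
    using assms[of 0] by (simp add: continuous_map)
  fix U n
  assume "openin Y U"
  then show "openin (chain_topology (enat n)) {x \<in> topspace (chain_topology \<infinity>). f x \<in> U}"
    using assms[of n] by (simp add: continuous_map)
qed

lemma chain_topology_separates_from:
  assumes "y \<notin> {0, 1}" "x \<noteq> y"
  obtains U where "openin (chain_topology n) U" "x \<in> U" "y \<notin> U"
proof
  show "openin (chain_topology n) ({0, 1, x} \<union> {Suc (max x y)..})"
    unfolding openin_chain_topology chain_open_def eventually_sequentially by auto
qed (use assms in auto)

lemma chain_topology_separates:
  assumes "x \<noteq> y" "{x, y} \<noteq> {0, 1}"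
  obtains U where "openin (chain_topology n) U" "x \<notin> U \<longleftrightarrow> y \<in> U"
proof (cases "y \<in> {0, 1}")
  case True
  then have "x \<notin> {0, 1}"
    using assms by auto
  with assms(1) show ?thesis
    by (metis chain_topology_separates_from that)
next
  case False
  with assms(1) show ?thesis
    by (metis chain_topology_separates_from that)
qed

lemma t0_space_chain_topology: "t0_space (chain_topology (enat n))"
  unfolding t0_space_def
proof (intro ballI impI)
  fix x y :: nat
  assume "x \<noteq> y"
  have separates_0_1: "openin (chain_topology (enat n)) (insert 0 {n + 2..})"
    unfolding openin_chain_topology chain_open_def eventually_sequentially by auto
  show "\<exists>U. openin (chain_topology (enat n)) U \<and> (x \<notin> U \<longleftrightarrow> y \<in> U)"
  proof (cases "{x, y} = {0, 1}")
    case True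
    with separates_0_1 show ?thesis
      by (auto simp: doubleton_eq_iff)
  next
    case False
    with \<open>x \<noteq> y\<close> show ?thesis
      by (metis chain_topology_separates)
  qed
qed

lemma chain_diagram:
  "top0_mono_directed_diagram TYPE('w) UNIV (\<le>) (\<lambda>n. chain_topology (enat n)) (\<lambda>i j x. x)"
  unfolding top0_mono_directed_diagram_def
  by (simp add: directed_poset_UNIV t0_space_chain_topology top0_mono_if_inj_on
      continuous_map_chain_topology_id)

definition merge01 :: "nat \<Rightarrow> nat" where
  "merge01 x = (if x = 1 then 0 else x)"

(* Since 0 and 1 are indistinguishable in chain_topology \<infinity>, deleting 1 yields its T0 reflection. *)
definition chain_colimit :: "nat topology" where
  "chain_colimit = subtopology (chain_topology \<infinity>) (- {1})"

lemma topspace_chain_colimit: "topspace chain_colimit = - {1}"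
  by (simp add: chain_colimit_def)

lemma t0_space_chain_colimit: "t0_space chain_colimit"
  unfolding t0_space_def
proof (intro ballI impI)
  fix x y
  assume x: "x \<in> topspace chain_colimit" and y: "y \<in> topspace chain_colimit" and "x \<noteq> y"
  then have "{x, y} \<noteq> {0, 1}"
    by (auto simp: topspace_chain_colimit doubleton_eq_iff)
  then obtain U where "openin (chain_topology \<infinity>) U" "x \<notin> U \<longleftrightarrow> y \<in> U"
    by (rule chain_topology_separates[OF \<open>x \<noteq> y\<close>])
  moreover have "openin chain_colimit (U \<inter> - {1})"
    unfolding chain_colimit_def by (rule openin_subtopology_Int) fact
  ultimately show "\<exists>V. openin chain_colimit V \<and> (x \<notin> V \<longleftrightarrow> y \<in> V)"
    using x y unfolding topspace_chain_colimit by blast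
qed

lemma continuous_map_merge01: "continuous_map (chain_topology n) chain_colimit merge01"
proof -
  have "continuous_map (chain_topology \<infinity>) (chain_topology \<infinity>) merge01"
    unfolding continuous_map
  proof (intro conjI allI impI)
    fix U
    assume U: "openin (chain_topology \<infinity>) U"
    moreover have "{x \<in> topspace (chain_topology \<infinity>). merge01 x \<in> U} = U"
      using chain_topology_infinity_indistinguishable[OF U] by (auto simp: merge01_def)
    ultimately show "openin (chain_topology \<infinity>) {x \<in> topspace (chain_topology \<infinity>). merge01 x \<in> U}"
      by simp
  qed simp
  then have merge: "continuous_map (chain_topology \<infinity>) chain_colimit merge01"
    unfolding chain_colimit_def by (rule continuous_map_into_subtopology) (simp add: merge01_def)
  have "continuous_map (chain_topology n) (chain_topology \<infinity>) (\<lambda>x. x)"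
    by (simp add: continuous_map_chain_topology_id)
  from continuous_map_compose[OF this merge] show ?thesis
    by (simp add: o_def)
qed

lemma chain_cocone_factors:
  assumes V: "t0_space V"
    and cocone: "is_cocone UNIV (\<le>) (\<lambda>n. chain_topology (enat n)) (\<lambda>i j x. x) V d"
  shows "continuous_map chain_colimit V (d 0) \<and> (\<forall>i x. d 0 (merge01 x) = d i x)"
proof -
  have compat: "d j x = d i x" if "i \<le> j" for i j x
    using cocone that unfolding is_cocone_def by simp
  have d: "d n = d 0" for n
    by (rule ext) (rule compat, simp)
  have "continuous_map (chain_topology (enat n)) V (d n)" for n
    using cocone by (simp add: is_cocone_def)
  then have "continuous_map (chain_topology (enat n)) V (d 0)" for n
    by (metis d)
  then have cont: "continuous_map (chain_topology \<infinity>) V (d 0)"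
    by (rule continuous_map_from_chain_topology_infinity)
  have "d 0 0 = d 0 1"
    by (rule continuous_map_t0_space_eq[OF cont V])
      (simp_all add: chain_topology_infinity_indistinguishable)
  then have "d 0 (merge01 x) = d i x" for i x
    using d[of i] by (simp add: merge01_def)
  with cont show ?thesis
    unfolding chain_colimit_def by (simp add: continuous_map_from_subtopology)
qed

lemma chain_colimit_is_top0_colimit:
  "top0_colimit TYPE('w) UNIV (\<le>) (\<lambda>n. chain_topology (enat n)) (\<lambda>i j x. x) chain_colimit (\<lambda>i. merge01)"
  unfolding top0_colimit_def
proof (intro conjI allI impI ballI)
  show "t0_space chain_colimit"
    by (rule t0_space_chain_colimit)
  show "is_cocone UNIV (\<le>) (\<lambda>n. chain_topology (enat n)) (\<lambda>i j x. x) chain_colimit (\<lambda>i. merge01)"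
    by (simp add: is_cocone_def continuous_map_merge01)
next
  fix V :: "'w topology" and d
  assume "t0_space V \<and> is_cocone UNIV (\<le>) (\<lambda>n. chain_topology (enat n)) (\<lambda>i j x. x) V d"
  then have "continuous_map chain_colimit V (d 0) \<and> (\<forall>i x. d 0 (merge01 x) = d i x)"
    using chain_cocone_factors[of V d] by simp
  then show "\<exists>u. continuous_map chain_colimit V u \<and>
      (\<forall>i\<in>UNIV. \<forall>x\<in>topspace (chain_topology (enat i)). u (merge01 x) = d i x)"
    by blast
next
  fix V :: "'w topology" and d u v y
  assume "t0_space V \<and> is_cocone UNIV (\<le>) (\<lambda>n. chain_topology (enat n)) (\<lambda>i j x. x) V d"
    and uv: "continuous_map chain_colimit V u \<and> continuous_map chain_colimit V v \<and>
      (\<forall>i\<in>UNIV. \<forall>x\<in>topspace (chain_topology (enat i)). u (merge01 x) = d i x) \<and>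
      (\<forall>i\<in>UNIV. \<forall>x\<in>topspace (chain_topology (enat i)). v (merge01 x) = d i x)"
    and "y \<in> topspace chain_colimit"
  then have "merge01 y = y"
    by (simp add: topspace_chain_colimit merge01_def)
  moreover have "u (merge01 y) = d 0 y" "v (merge01 y) = d 0 y"
    using uv unfolding topspace_chain_topology by blast+
  ultimately show "u y = v y"
    by simp
qed

theorem corollary5p5:
  fixes X :: "'a topology"
  assumes "t0_space X"
  shows "(topspace X = {} \<longrightarrow>
            top0_finitely_generated TYPE('i) TYPE('z) TYPE('c) TYPE('w) X) \<and>
         (top0_finitely_generated TYPE(nat) TYPE(nat) TYPE(nat) TYPE('w) X \<longrightarrow>
            topspace X = {})"
proof (intro conjI impI)
  assume "topspace X = {}"
  then show "top0_finitely_generated TYPE('i) TYPE('z) TYPE('c) TYPE('w) X"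
    by (rule top0_finitely_generated_empty)
next
  assume fg: "top0_finitely_generated TYPE(nat) TYPE(nat) TYPE(nat) TYPE('w) X"
  show "topspace X = {}"
  proof (rule ccontr)
    assume "topspace X \<noteq> {}"
    then have "\<not> top0_finitely_generated TYPE(nat) TYPE(nat) TYPE(nat) TYPE('w) X"
      by (intro not_top0_finitely_generated_if_colimit_merges
          [OF chain_diagram chain_colimit_is_top0_colimit, of 0 0 1])
        (simp_all add: merge01_def)
    with fg show False
      by contradiction
  qed
qed

end
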